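(* Let $i\in\mathbb{N}_0$ and let $\alpha,\beta\in\mathbb{C}$. Then $$F^{1:1;2}_{1:0;1}\left[\begin{matrix}\alpha: & \beta-2-i\,; & 2+i,\ \tfrac12\alpha+1\,;\\ \beta: & -\,; & \tfrac12\alpha\,;\end{matrix}\ -1,\ -1\right] =\frac{2^{-2-\alpha}\,\Gamma\!\left(\tfrac12\beta\right)}{(i+1)!\,\Gamma\!\left(\tfrac12\beta-i-2\right)}\sum_{r=0}^{i}(-1)^r\binom{i}{r}\frac{\Gamma\!\left(\frac14\beta-1+\frac{r-i}{2}\right)}{\Gamma\!\left(\frac14\beta+1+\frac{r-i}{2}\right)}$$ and $$F^{1:1;2}_{1:0;1}\left[\begin{matrix}\alpha: & \beta-2+i\,; & 2-i,\ \tfrac12\alpha+1\,;\\ \beta: & -\,; & \tfrac12\alpha\,;\end{matrix}\ -1,\ -1\right] =\frac{2^{-2-\alpha}\,\Gamma\!\left(\tfrac12\beta\right)}{\Gamma\!\left(\tfrac12\beta+i-2\right)}\sum_{r=0}^{i}\binom{i}{r}\frac{\Gamma\!\left(\frac14\beta-1+\frac{r+i}{2}\right)}{\Gamma\!\left(\frac14\beta+1+\frac{r-i}{2}\right)}.$$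
   Context: For $\lambda\in\mathbb{C}$ and $n\in\mathbb{N}_0$, $(\lambda)_0=1$ and $(\lambda)_n=\lambda(\lambda+1)\cdots(\lambda+n-1)$; $\Gamma$ is Euler's Gamma function and $\binom{i}{r}$ the binomial coefficient. The (generalized) Kampé de Fériet function is defined by $$F^{H:A;B}_{G:C;D}\left[\begin{matrix}(h_H): & (a_A)\,; & (b_B)\,;\\ (g_G): & (c_C)\,; & (d_D)\,;\end{matrix}\ x,\ y\right]=\sum_{m=0}^\infty\sum_{n=0}^\infty\frac{\prod_{j=1}^H(h_j)_{m+n}\prod_{j=1}^A(a_j)_m\prod_{j=1}^B(b_j)_n}{\prod_{j=1}^G(g_j)_{m+n}\prod_{j=1}^C(c_j)_m\prod_{j=1}^D(d_j)_n}\frac{x^m}{m!}\frac{y^n}{n!},$$ where a dash "$-$" denotes an empty list of parameters (empty products equal $1$). Parameters are tacitly assumed to be such that the double series converges, no denominator parameter is a non-positive integer, and all Gamma values appearing are finite. *)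

theory Defs
  imports "HOL-Analysis.Analysis"
begin

text \<open>Terms of the generalized Kampe de Feriet double series
  F^{H:A;B}_{G:C;D}[(h):(a);(b); (g):(c);(d); x, y]; parameter lists are
  given as lists (the empty list corresponds to a dash).\<close>

definition kdf_term ::
  "complex list \<Rightarrow> complex list \<Rightarrow> complex list \<Rightarrow>
   complex list \<Rightarrow> complex list \<Rightarrow> complex list \<Rightarrow>
   complex \<Rightarrow> complex \<Rightarrow> nat \<times> nat \<Rightarrow> complex" where
  "kdf_term hs as bs gs cs ds x y = (\<lambda>(m, n).
     (prod_list (map (\<lambda>h. pochhammer h (m + n)) hs)
      * prod_list (map (\<lambda>a. pochhammer a m) as)
      * prod_list (map (\<lambda>b. pochhammer b n) bs))
     / (prod_list (map (\<lambda>g. pochhammer g (m + n)) gs)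
      * prod_list (map (\<lambda>c. pochhammer c m) cs)
      * prod_list (map (\<lambda>d. pochhammer d n) ds))
     * (x ^ m / fact m) * (y ^ n / fact n))"

text \<open>Convergence of the double series (unconditional summation over all
  index pairs (m,n), which for complex numbers is absolute convergence).\<close>

definition kdf_converges ::
  "complex list \<Rightarrow> complex list \<Rightarrow> complex list \<Rightarrow>
   complex list \<Rightarrow> complex list \<Rightarrow> complex list \<Rightarrow>
   complex \<Rightarrow> complex \<Rightarrow> bool" where
  "kdf_converges hs as bs gs cs ds x y \<longleftrightarrow>
     kdf_term hs as bs gs cs ds x y summable_on UNIV"

definition KdF ::
  "complex list \<Rightarrow> complex list \<Rightarrow> complex list \<Rightarrow>
   complex list \<Rightarrow> complex list \<Rightarrow> complex list \<Rightarrow>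
   complex \<Rightarrow> complex \<Rightarrow> complex" where
  "KdF hs as bs gs cs ds x y = infsum (kdf_term hs as bs gs cs ds x y) UNIV"

end

theory Submission
  imports Defs
begin

(* Along the diagonals m + n = N the factor (alpha/2 + 1)_n / (alpha/2)_n = 1 + 2n/alpha turns the
   Kampe de Feriet series into Chu-Vandermonde sums and a weighted variant of them. For b + c = beta
   what remains is sum_N (-alpha gchoose N) (1 + 2cN/(alpha beta)), a binomial series together with its
   x d/dx, which Abel's theorem evaluates at the boundary point x = 1 to 2^(-alpha) b/beta.
   Both Gamma sums are 4b/beta. In the first, Gamma x / Gamma (x + 2) = 1/x - 1/(x + 1) reduces it to
   the alternating sums sum_r (-1)^r C(i,r) / (w + r) = i! / (w)_(i+1). In the second the quotients are
   Pochhammer symbols (B + r/2)_(i-2), summed by sum_r C(n+1,r) (B + r/2)_n = 2 (2B + n)_n. *)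

section \<open>Binomial sums of Pochhammer symbols\<close>

lemma pochhammer_two: "pochhammer x 2 = x * (x + 1)"
  by (simp add: numeral_2_eq_2 pochhammer_Suc)

lemma pochhammer_add_one:
  fixes a :: "'a::field"
  assumes "a \<noteq> 0"
  shows "pochhammer (a + 1) n = pochhammer a n * (a + of_nat n) / a"
  using pochhammer_rec[of a n] pochhammer_Suc[of a n] assms by (simp add: field_simps)

lemma not_nonpos_Ints_imp_nonzero:
  fixes x :: "'a::field_char_0"
  assumes "x \<notin> \<int>\<^sub>\<le>\<^sub>0"
  shows "x \<noteq> 0" and "x + 1 \<noteq> 0"
  using assms pochhammer_eq_0_imp_nonpos_Int[of x 2] by (auto simp: pochhammer_two)

lemma binomial_sum_Suc:
  fixes f :: "nat \<Rightarrow> 'a::comm_ring_1"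
  shows "(\<Sum>r\<le>Suc n. of_nat (Suc n choose r) * f r)
       = (\<Sum>r\<le>n. of_nat (n choose r) * (f r + f (Suc r)))"
proof -
  have "(\<Sum>r\<le>Suc n. of_nat (Suc n choose r) * f r)
      = f 0 + (\<Sum>r\<le>n. of_nat (Suc n choose Suc r) * f (Suc r))"
    by (subst sum.atMost_Suc_shift) simp
  moreover have "(\<Sum>r\<le>n. of_nat (n choose r) * f r)
      = f 0 + (\<Sum>r<n. of_nat (n choose Suc r) * f (Suc r))"
    by (subst sum.atMost_shift) simp
  moreover have "(\<Sum>r\<le>n. of_nat (n choose Suc r) * f (Suc r))
      = (\<Sum>r<n. of_nat (n choose Suc r) * f (Suc r))"
    by (simp add: binomial_eq_0 flip: lessThan_Suc_atMost)
  ultimately show ?thesis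
    by (simp add: sum.distrib algebra_simps)
qed

lemma binomial_sum_absorb:
  fixes f :: "nat \<Rightarrow> 'a::comm_ring_1"
  shows "(\<Sum>r\<le>Suc n. of_nat (Suc n choose r) * of_nat r * f r)
       = of_nat (Suc n) * (\<Sum>r\<le>n. of_nat (n choose r) * f (Suc r))"
proof -
  have "of_nat (Suc n choose Suc r) * of_nat (Suc r) = (of_nat (Suc n) * of_nat (n choose r) :: 'a)" for r
    by (metis Suc_times_binomial_eq of_nat_mult)
  then show ?thesis
    by (subst sum.atMost_Suc_shift) (simp add: sum_distrib_left mult.assoc del: of_nat_Suc)
qed

lemma alternating_binomial_reciprocal_sum:
  fixes w :: "'a::field_char_0"
  assumes "pochhammer w (Suc i) \<noteq> 0"
  shows "(\<Sum>r\<le>i. (-1) ^ r * of_nat (i choose r) / (w + of_nat r)) = fact i / pochhammer w (Suc i)"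
  using assms
proof (induction i arbitrary: w)
  case 0
  then show ?case by simp
next
  case (Suc i)
  have rec: "pochhammer w (Suc (Suc i)) = pochhammer w (Suc i) * (w + of_nat (Suc i))"
            "pochhammer w (Suc (Suc i)) = w * pochhammer (w + 1) (Suc i)"
    by (rule pochhammer_Suc, rule pochhammer_rec)
  with Suc.prems have nonzero: "pochhammer w (Suc i) \<noteq> 0" "pochhammer (w + 1) (Suc i) \<noteq> 0"
      "w + of_nat (Suc i) \<noteq> 0" "w \<noteq> 0"
    by auto
  have "(\<Sum>r\<le>Suc i. (-1) ^ r * of_nat (Suc i choose r) / (w + of_nat r))
      = (\<Sum>r\<le>Suc i. of_nat (Suc i choose r) * ((-1) ^ r / (w + of_nat r)))"
    by (simp add: mult.commute)
  also have "\<dots> = (\<Sum>r\<le>i. of_nat (i choose r) * ((-1) ^ r / (w + of_nat r) + (-1) ^ Suc r / (w + of_nat (Suc r))))"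
    by (rule binomial_sum_Suc)
  also have "\<dots> = (\<Sum>r\<le>i. (-1) ^ r * of_nat (i choose r) / (w + of_nat r))
                 - (\<Sum>r\<le>i. (-1) ^ r * of_nat (i choose r) / ((w + 1) + of_nat r))"
    by (simp add: sum_subtractf[symmetric] algebra_simps add_divide_distrib diff_divide_distrib)
  also have "\<dots> = fact i / pochhammer w (Suc i) - fact i / pochhammer (w + 1) (Suc i)"
    using nonzero by (simp add: Suc.IH)
  also have "\<dots> = fact (Suc i) / pochhammer w (Suc (Suc i))"
  proof -
    have "fact i / pochhammer w (Suc i) = fact i * (w + of_nat (Suc i)) / pochhammer w (Suc (Suc i))"
      unfolding rec(1) using nonzero by simp
    moreover have "fact i / pochhammer (w + 1) (Suc i) = fact i * w / pochhammer w (Suc (Suc i))"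
      unfolding rec(2) using nonzero by simp
    ultimately show ?thesis
      by (simp add: diff_divide_distrib[symmetric] algebra_simps)
  qed
  finally show ?case .
qed

lemma pochhammer_reciprocal_difference:
  fixes v :: "'a::field_char_0"
  assumes "pochhammer v (Suc i) \<noteq> 0" and "pochhammer (v + 2) (Suc i) \<noteq> 0"
  shows "pochhammer v (Suc (Suc i)) * (1 / pochhammer v (Suc i) - 1 / pochhammer (v + 2) (Suc i))
       = of_nat (Suc i) * (2 * v + of_nat i + 2) / (v + of_nat i + 2)"
proof -
  have "pochhammer (v + 2) (Suc i) = pochhammer (v + 2) i * (v + of_nat i + 2)"
    by (simp add: pochhammer_Suc add_ac)
  then have "v + of_nat i + 2 \<noteq> 0" "pochhammer (v + 2) i \<noteq> 0"
    using assms(2) by auto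
  have "pochhammer v (Suc (Suc i)) / pochhammer v (Suc i) = v + of_nat i + 1"
    using assms(1) by (simp add: pochhammer_Suc add_ac)
  moreover have "pochhammer v (Suc (Suc i)) / pochhammer (v + 2) (Suc i) = v * (v + 1) / (v + of_nat i + 2)"
  proof -
    have "pochhammer v (Suc (Suc i)) = v * (v + 1) * pochhammer (v + 2) i"
      by (simp add: pochhammer_rec add.assoc)
    moreover have "pochhammer (v + 2) (Suc i) = pochhammer (v + 2) i * (v + of_nat i + 2)"
      by (simp add: pochhammer_Suc add_ac)
    ultimately show ?thesis
      using \<open>pochhammer (v + 2) i \<noteq> 0\<close> by simp
  qed
  moreover have "v + of_nat i + 1 - v * (v + 1) / (v + of_nat i + 2)
      = of_nat (Suc i) * (2 * v + of_nat i + 2) / (v + of_nat i + 2)"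
    using \<open>v + of_nat i + 2 \<noteq> 0\<close> by (simp add: field_simps)
  ultimately show ?thesis
    by (simp add: right_diff_distrib)
qed

lemma binomial_sum_pochhammer_half_shift:
  fixes B :: "'a::field_char_0"
  shows "(\<Sum>r\<le>Suc n. of_nat (Suc n choose r) * pochhammer (B + of_nat r / 2) n)
       = 2 * pochhammer (2 * B + of_nat n) n"
proof (induction n arbitrary: B)
  case 0
  then show ?case by simp
next
  case (Suc n)
  define u where "u r = pochhammer (B + 1 + of_nat r / 2) n" for r
  define c where "c = 2 * B + of_nat n + 2"
  have u_sum: "(\<Sum>r\<le>Suc n. of_nat (Suc n choose r) * u r) = 2 * pochhammer c n"
    using Suc.IH[of "B + 1"] by (simp add: u_def c_def algebra_simps)
  have u_Suc_sum: "(\<Sum>r\<le>Suc n. of_nat (Suc n choose r) * u (Suc r)) = 2 * pochhammer (c + 1) n"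
    using Suc.IH[of "B + 3 / 2"] by (simp add: u_def c_def algebra_simps add_divide_distrib)
  have "(\<Sum>r\<le>Suc (Suc n). of_nat (Suc (Suc n) choose r) * pochhammer (B + of_nat r / 2) (Suc n))
      = B * (\<Sum>r\<le>Suc (Suc n). of_nat (Suc (Suc n) choose r) * u r)
        + (\<Sum>r\<le>Suc (Suc n). of_nat (Suc (Suc n) choose r) * of_nat r * u r) / 2"
    unfolding sum_distrib_left sum_divide_distrib sum.distrib[symmetric]
    by (rule sum.cong) (simp_all add: pochhammer_rec u_def algebra_simps add_divide_distrib)
  also have "\<dots> = B * (2 * pochhammer c n + 2 * pochhammer (c + 1) n)
                 + of_nat (Suc (Suc n)) * (2 * pochhammer (c + 1) n) / 2"
    unfolding binomial_sum_Suc[of "Suc n"] binomial_sum_absorb distrib_left sum.distrib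
      u_sum u_Suc_sum ..
  also have "\<dots> = 2 * B * pochhammer c n + c * pochhammer (c + 1) n"
    by (simp add: c_def algebra_simps)
  also have "\<dots> = 2 * B * pochhammer c n + pochhammer c n * (c + of_nat n)"
    using pochhammer_rec[of c n] pochhammer_Suc[of c n] by simp
  also have "\<dots> = 2 * ((c - 1) * pochhammer c n)"
    by (simp add: c_def algebra_simps)
  also have "(c - 1) * pochhammer c n = pochhammer (2 * B + of_nat (Suc n)) (Suc n)"
    by (simp add: pochhammer_rec c_def add_ac)
  finally show ?case .
qed

corollary binomial_sum_pochhammer_half_shift_Suc_Suc:
  fixes B :: "'a::field_char_0"
  shows "(\<Sum>r\<le>Suc (Suc n). of_nat (Suc (Suc n) choose r) * pochhammer (B + of_nat r / 2) n)
       = 2 * pochhammer (2 * B + of_nat n) n + 2 * pochhammer (2 * B + of_nat n + 1) n"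
proof -
  have "(\<Sum>r\<le>Suc (Suc n). of_nat (Suc (Suc n) choose r) * pochhammer (B + of_nat r / 2) n)
      = (\<Sum>r\<le>Suc n. of_nat (Suc n choose r) * pochhammer (B + of_nat r / 2) n)
        + (\<Sum>r\<le>Suc n. of_nat (Suc n choose r) * pochhammer ((B + 1 / 2) + of_nat r / 2) n)"
    unfolding binomial_sum_Suc[of "Suc n"] distrib_left sum.distrib
    by (simp add: add_divide_distrib add_ac)
  also have "\<dots> = 2 * pochhammer (2 * B + of_nat n) n + 2 * pochhammer (2 * B + of_nat n + 1) n"
    unfolding binomial_sum_pochhammer_half_shift by (simp add: algebra_simps)
  finally show ?thesis .
qed

lemma pochhammer_binomial_sum_weighted:
  fixes b c :: "'a::comm_ring_1"
  shows "(\<Sum>m\<le>N. of_nat (N choose m) * of_nat (N - m) * pochhammer b m * pochhammer c (N - m))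
       = of_nat N * c * pochhammer (b + c + 1) (N - 1)"
proof (cases N)
  case 0
  then show ?thesis by simp
next
  case (Suc M)
  have "of_nat (N choose m) * of_nat (N - m) * pochhammer b m * pochhammer c (N - m)
      = of_nat N * c * (of_nat (M choose m) * pochhammer b m * pochhammer (c + 1) (M - m))"
    if "m \<le> M" for m
  proof -
    have "(N - m) * (N choose m) = N * (M choose m)"
      using binomial_absorb_comp[of N m] Suc by simp
    then have "of_nat (N choose m) * of_nat (N - m) = (of_nat N * of_nat (M choose m) :: 'a)"
      by (metis of_nat_mult mult.commute)
    moreover have "pochhammer c (N - m) = c * pochhammer (c + 1) (M - m)"
      using that Suc by (simp add: Suc_diff_le pochhammer_rec)
    ultimately show ?thesis
      by (simp add: algebra_simps)
  qed
  then have "(\<Sum>m\<le>N. of_nat (N choose m) * of_nat (N - m) * pochhammer b m * pochhammer c (N - m))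
      = of_nat N * c * (\<Sum>m\<le>M. of_nat (M choose m) * pochhammer b m * pochhammer (c + 1) (M - m))"
    by (simp add: Suc sum_distrib_left)
  then show ?thesis
    by (simp add: Suc add.assoc flip: pochhammer_binomial_sum)
qed

section \<open>The two Gamma sums\<close>

lemma Gamma_divide_Gamma_add_of_nat:
  assumes "x \<notin> \<int>\<^sub>\<le>\<^sub>0"
  shows "Gamma x / Gamma (x + of_nat n) = 1 / pochhammer x n"
  using pochhammer_Gamma[OF assms, of n] by simp

lemma Gamma_divide_Gamma_add_two:
  fixes x :: complex
  assumes "x \<notin> \<int>\<^sub>\<le>\<^sub>0"
  shows "Gamma x / Gamma (x + 2) = 1 / x - 1 / (x + 1)"
  using Gamma_divide_Gamma_add_of_nat[OF assms, of 2] not_nonpos_Ints_imp_nonzero[OF assms]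
  by (simp add: pochhammer_two field_simps)

lemma alternating_binomial_sum_Gamma_half:
  fixes v :: complex
  assumes "\<And>r. r \<le> i \<Longrightarrow> (v + of_nat r) / 2 \<notin> \<int>\<^sub>\<le>\<^sub>0"
  shows "pochhammer v (Suc (Suc i)) / fact (Suc i)
       * (\<Sum>r\<le>i. (-1) ^ r * of_nat (i choose r)
            * Gamma ((v + of_nat r) / 2) / Gamma ((v + of_nat r) / 2 + 2))
       = 2 * (2 * v + of_nat i + 2) / (v + of_nat i + 2)"
proof -
  have ratio: "Gamma ((v + of_nat r) / 2) / Gamma ((v + of_nat r) / 2 + 2)
        = 2 / (v + of_nat r) - 2 / ((v + 2) + of_nat r)"
    and "v + of_nat r \<noteq> 0" "(v + 2) + of_nat r \<noteq> 0" if "r \<le> i" for r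
    using not_nonpos_Ints_imp_nonzero[OF assms[OF that]] Gamma_divide_Gamma_add_two[OF assms[OF that]]
    by (simp_all add: field_simps)
  then have nonzero: "pochhammer v (Suc i) \<noteq> 0" "pochhammer (v + 2) (Suc i) \<noteq> 0"
    by (auto simp: pochhammer_eq_0_iff eq_neg_iff_add_eq_0)
  have "(\<Sum>r\<le>i. (-1) ^ r * of_nat (i choose r)
            * Gamma ((v + of_nat r) / 2) / Gamma ((v + of_nat r) / 2 + 2))
      = (\<Sum>r\<le>i. (-1) ^ r * of_nat (i choose r) * (2 / (v + of_nat r) - 2 / ((v + 2) + of_nat r)))"
    by (intro sum.cong) (simp_all add: ratio flip: times_divide_eq_right)
  also have "\<dots> = 2 * ((\<Sum>r\<le>i. (-1) ^ r * of_nat (i choose r) / (v + of_nat r))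
                     - (\<Sum>r\<le>i. (-1) ^ r * of_nat (i choose r) / ((v + 2) + of_nat r)))"
    unfolding sum_subtractf[symmetric] sum_distrib_left by (intro sum.cong) (simp_all add: algebra_simps)
  also have "\<dots> = 2 * (fact i / pochhammer v (Suc i) - fact i / pochhammer (v + 2) (Suc i))"
    using nonzero by (simp add: alternating_binomial_reciprocal_sum)
  also have "\<dots> = 2 * fact i * (1 / pochhammer v (Suc i) - 1 / pochhammer (v + 2) (Suc i))"
    by (simp add: algebra_simps)
  finally have sum_eq: "(\<Sum>r\<le>i. (-1) ^ r * of_nat (i choose r)
            * Gamma ((v + of_nat r) / 2) / Gamma ((v + of_nat r) / 2 + 2))
      = 2 * fact i * (1 / pochhammer v (Suc i) - 1 / pochhammer (v + 2) (Suc i))" .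
  have rearrange: "pochhammer v (Suc (Suc i)) / fact (Suc i) * (2 * fact i * X)
      = 2 / of_nat (Suc i) * (pochhammer v (Suc (Suc i)) * X)" for X :: complex
    by (simp add: fact_Suc field_simps del: of_nat_Suc)
  show ?thesis
    unfolding sum_eq rearrange pochhammer_reciprocal_difference[OF nonzero] by (simp del: of_nat_Suc)
qed

lemma Gamma_alternating_binomial_sum:
  fixes \<beta> :: complex
  assumes "\<beta> \<noteq> 0" and "\<beta> / 2 - of_nat i - 2 \<notin> \<int>\<^sub>\<le>\<^sub>0"
    and "\<And>r. r \<le> i \<Longrightarrow> \<beta> / 4 - 1 + (of_nat r - of_nat i) / 2 \<notin> \<int>\<^sub>\<le>\<^sub>0"
  shows "Gamma (\<beta> / 2) / (fact (i + 1) * Gamma (\<beta> / 2 - of_nat i - 2))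
       * (\<Sum>r\<le>i. (-1) ^ r * of_nat (i choose r)
            * Gamma (\<beta> / 4 - 1 + (of_nat r - of_nat i) / 2)
            / Gamma (\<beta> / 4 + 1 + (of_nat r - of_nat i) / 2))
       = 4 * (\<beta> - 2 - of_nat i) / \<beta>"
proof -
  define v where "v = \<beta> / 2 - of_nat i - 2"
  have args: "\<beta> / 4 - 1 + (of_nat r - of_nat i) / 2 = (v + of_nat r) / 2"
    "\<beta> / 4 + 1 + (of_nat r - of_nat i) / 2 = (v + of_nat r) / 2 + 2" for r
    by (simp_all add: v_def field_simps)
  have "Gamma (\<beta> / 2) / Gamma (\<beta> / 2 - of_nat i - 2) = pochhammer v (Suc (Suc i))"
    using pochhammer_Gamma[of v "Suc (Suc i)"] assms(2) by (simp add: v_def add_ac)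
  then have "Gamma (\<beta> / 2) / (fact (i + 1) * Gamma (\<beta> / 2 - of_nat i - 2))
      = pochhammer v (Suc (Suc i)) / fact (Suc i)"
    by (metis Suc_eq_plus1 divide_divide_eq_left mult.commute)
  moreover have "2 * (2 * v + of_nat i + 2) / (v + of_nat i + 2) = 4 * (\<beta> - 2 - of_nat i) / \<beta>"
    using assms(1) by (simp add: v_def field_simps)
  ultimately show ?thesis
    using alternating_binomial_sum_Gamma_half[of i v] assms(3) unfolding args by simp
qed

lemma Gamma_binomial_sum_two_le:
  fixes \<beta> :: complex
  assumes "2 \<le> i" and "\<beta> / 2 \<notin> \<int>\<^sub>\<le>\<^sub>0"
    and "\<And>r. r \<le> i \<Longrightarrow> \<beta> / 4 + 1 + (of_nat r - of_nat i) / 2 \<notin> \<int>\<^sub>\<le>\<^sub>0"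
  shows "Gamma (\<beta> / 2) / Gamma (\<beta> / 2 + of_nat i - 2)
       * (\<Sum>r\<le>i. of_nat (i choose r)
            * Gamma (\<beta> / 4 - 1 + (of_nat r + of_nat i) / 2)
            / Gamma (\<beta> / 4 + 1 + (of_nat r - of_nat i) / 2))
       = 4 * (\<beta> - 2 + of_nat i) / \<beta>"
proof -
  obtain n where i_eq: "i = Suc (Suc n)"
    using assms(1) by (metis add_2_eq_Suc le_Suc_ex)
  define z where "z = \<beta> / 2"
  define B where "B = \<beta> / 4 - of_nat n / 2"
  have "z \<noteq> 0" and "z \<notin> \<int>\<^sub>\<le>\<^sub>0"
    using assms(2) by (auto simp: z_def)
  have args: "\<beta> / 4 + 1 + (of_nat r - of_nat i) / 2 = B + of_nat r / 2"
    "\<beta> / 4 - 1 + (of_nat r + of_nat i) / 2 = B + of_nat r / 2 + of_nat n" for r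
    using i_eq by (simp_all add: B_def field_simps)
  have "(\<Sum>r\<le>i. of_nat (i choose r)
          * Gamma (\<beta> / 4 - 1 + (of_nat r + of_nat i) / 2)
          / Gamma (\<beta> / 4 + 1 + (of_nat r - of_nat i) / 2))
      = (\<Sum>r\<le>Suc (Suc n). of_nat (Suc (Suc n) choose r) * pochhammer (B + of_nat r / 2) n)"
    using assms(3) unfolding args unfolding i_eq by (intro sum.cong) (simp_all add: pochhammer_Gamma)
  also have "\<dots> = 2 * pochhammer z n + 2 * pochhammer (z + 1) n"
    unfolding binomial_sum_pochhammer_half_shift_Suc_Suc by (simp add: B_def z_def add_ac)
  also have "pochhammer (z + 1) n = pochhammer z n * (z + of_nat n) / z"
    using \<open>z \<noteq> 0\<close> by (rule pochhammer_add_one)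
  finally have sum_eq: "(\<Sum>r\<le>i. of_nat (i choose r)
          * Gamma (\<beta> / 4 - 1 + (of_nat r + of_nat i) / 2)
          / Gamma (\<beta> / 4 + 1 + (of_nat r - of_nat i) / 2))
      = 2 * pochhammer z n + 2 * (pochhammer z n * (z + of_nat n) / z)" .
  have "Gamma (\<beta> / 2) / Gamma (\<beta> / 2 + of_nat i - 2) = 1 / pochhammer z n"
    using Gamma_divide_Gamma_add_of_nat[OF \<open>z \<notin> \<int>\<^sub>\<le>\<^sub>0\<close>, of n] i_eq by (simp add: z_def algebra_simps)
  moreover have "pochhammer z n \<noteq> 0"
    using \<open>z \<notin> \<int>\<^sub>\<le>\<^sub>0\<close> pochhammer_eq_0_imp_nonpos_Int by blast
  ultimately show ?thesis
    using \<open>z \<noteq> 0\<close> i_eq unfolding sum_eq by (simp add: z_def field_simps)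
qed

lemma Gamma_binomial_sum_less_two:
  fixes \<beta> :: complex
  assumes "i < 2" and "\<beta> / 2 + of_nat i - 2 \<notin> \<int>\<^sub>\<le>\<^sub>0"
    and "\<And>r. r \<le> i \<Longrightarrow> \<beta> / 4 - 1 + (of_nat r + of_nat i) / 2 \<notin> \<int>\<^sub>\<le>\<^sub>0"
  shows "Gamma (\<beta> / 2) / Gamma (\<beta> / 2 + of_nat i - 2)
       * (\<Sum>r\<le>i. of_nat (i choose r)
            * Gamma (\<beta> / 4 - 1 + (of_nat r + of_nat i) / 2)
            / Gamma (\<beta> / 4 + 1 + (of_nat r - of_nat i) / 2))
       = 4 * (\<beta> - 2 + of_nat i) / \<beta>"
proof -
  define z where "z = \<beta> / 2"
  consider (zero) "i = 0" | (one) "i = 1"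
    using assms(1) by linarith
  then show ?thesis
  proof cases
    case zero
    define x where "x = \<beta> / 4 - 1"
    have "x \<notin> \<int>\<^sub>\<le>\<^sub>0" and "z - 2 \<notin> \<int>\<^sub>\<le>\<^sub>0"
      using assms(2) assms(3)[of 0] zero by (simp_all add: x_def z_def)
    have "Gamma (\<beta> / 2) / Gamma (\<beta> / 2 + of_nat i - 2)
       * (\<Sum>r\<le>i. of_nat (i choose r)
            * Gamma (\<beta> / 4 - 1 + (of_nat r + of_nat i) / 2)
            / Gamma (\<beta> / 4 + 1 + (of_nat r - of_nat i) / 2))
        = Gamma (z - 2 + of_nat 2) / Gamma (z - 2) * (Gamma x / Gamma (x + 2))"
      using zero by (simp add: x_def z_def add.commute)
    also have "\<dots> = (z - 2) * (z - 1) * (1 / x - 1 / (x + 1))"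
      using pochhammer_Gamma[OF \<open>z - 2 \<notin> \<int>\<^sub>\<le>\<^sub>0\<close>, of 2]
      by (simp only: Gamma_divide_Gamma_add_two[OF \<open>x \<notin> \<int>\<^sub>\<le>\<^sub>0\<close>])
        (simp add: pochhammer_two algebra_simps)
    also have "\<dots> = 4 * (\<beta> - 2 + of_nat i) / \<beta>"
      using zero not_nonpos_Ints_imp_nonzero[OF \<open>x \<notin> \<int>\<^sub>\<le>\<^sub>0\<close>] by (simp add: x_def z_def field_simps)
    finally show ?thesis .
  next
    case one
    define x where "x = \<beta> / 4"
    have "x - 1 / 2 \<notin> \<int>\<^sub>\<le>\<^sub>0" "x \<notin> \<int>\<^sub>\<le>\<^sub>0" and "z - 1 \<notin> \<int>\<^sub>\<le>\<^sub>0"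
      using assms(2) assms(3)[of 0] assms(3)[of 1] one
      by (simp_all add: x_def z_def)
    have "Gamma (\<beta> / 2) / Gamma (\<beta> / 2 + of_nat i - 2)
       * (\<Sum>r\<le>i. of_nat (i choose r)
            * Gamma (\<beta> / 4 - 1 + (of_nat r + of_nat i) / 2)
            / Gamma (\<beta> / 4 + 1 + (of_nat r - of_nat i) / 2))
        = Gamma (z - 1 + 1) / Gamma (z - 1)
          * (Gamma (x - 1 / 2) / Gamma (x - 1 / 2 + 1) + Gamma x / Gamma (x + 1))"
      using one by (simp add: x_def z_def add.commute)
    also have "\<dots> = (z - 1) * (1 / (x - 1 / 2) + 1 / x)"
      using pochhammer_Gamma[OF \<open>z - 1 \<notin> \<int>\<^sub>\<le>\<^sub>0\<close>, of 1]
        Gamma_divide_Gamma_add_of_nat[OF \<open>x - 1 / 2 \<notin> \<int>\<^sub>\<le>\<^sub>0\<close>, of 1]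
        Gamma_divide_Gamma_add_of_nat[OF \<open>x \<notin> \<int>\<^sub>\<le>\<^sub>0\<close>, of 1]
      by simp
    also have "\<dots> = 4 * (\<beta> - 2 + of_nat i) / \<beta>"
      using one not_nonpos_Ints_imp_nonzero(1)[OF \<open>x - 1 / 2 \<notin> \<int>\<^sub>\<le>\<^sub>0\<close>]
        not_nonpos_Ints_imp_nonzero(1)[OF \<open>x \<notin> \<int>\<^sub>\<le>\<^sub>0\<close>]
      by (simp add: x_def z_def field_simps)
    finally show ?thesis .
  qed
qed

lemma Gamma_binomial_sum:
  fixes \<beta> :: complex
  assumes "\<beta> / 2 \<notin> \<int>\<^sub>\<le>\<^sub>0" and "\<beta> / 2 + of_nat i - 2 \<notin> \<int>\<^sub>\<le>\<^sub>0"
    and "\<forall>r\<le>i. \<beta> / 4 - 1 + (of_nat r + of_nat i) / 2 \<notin> \<int>\<^sub>\<le>\<^sub>0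
              \<and> \<beta> / 4 + 1 + (of_nat r - of_nat i) / 2 \<notin> \<int>\<^sub>\<le>\<^sub>0"
  shows "Gamma (\<beta> / 2) / Gamma (\<beta> / 2 + of_nat i - 2)
       * (\<Sum>r\<le>i. of_nat (i choose r)
            * Gamma (\<beta> / 4 - 1 + (of_nat r + of_nat i) / 2)
            / Gamma (\<beta> / 4 + 1 + (of_nat r - of_nat i) / 2))
       = 4 * (\<beta> - 2 + of_nat i) / \<beta>"
proof (cases "i < 2")
  case True
  then show ?thesis
    using assms(2,3) by (intro Gamma_binomial_sum_less_two) auto
next
  case False
  then show ?thesis
    using assms(1,3) by (intro Gamma_binomial_sum_two_le) auto
qed

section \<open>Summation of the double series\<close>

lemma has_sum_diagonals:
  fixes t :: "nat \<times> nat \<Rightarrow> 'a::{topological_comm_monoid_add,t3_space}"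
  assumes "(t has_sum S) UNIV"
  shows "((\<lambda>N. \<Sum>m\<le>N. t (m, N - m)) has_sum S) UNIV"
proof -
  define h where "h = (\<lambda>(N::nat, m::nat). (m, N - m))"
  have "bij_betw h (SIGMA N:UNIV. {..N}) UNIV"
    by (rule bij_betw_byWitness[where f' = "\<lambda>(m, n). (m + n, m)"]) (auto simp: h_def)
  then have "((\<lambda>x. t (h x)) has_sum S) (SIGMA N:UNIV. {..N})"
    using assms by (simp add: has_sum_reindex_bij_betw)
  then show ?thesis
    by (rule has_sum_SigmaD) (auto simp: h_def intro!: has_sum_finiteI)
qed

lemma Abel_limit_summable_norm:
  fixes d :: "nat \<Rightarrow> 'a::{real_normed_div_algebra,banach}"
  assumes "summable (\<lambda>N. norm (d N))"
  shows "((\<lambda>x. \<Sum>N. d N * of_real x ^ N) \<longlongrightarrow> (\<Sum>N. d N)) (at_left 1)"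
proof -
  define F where "F = (\<lambda>x::real. \<Sum>N. d N * of_real x ^ N)"
  have limit: "uniform_limit {0..1} (\<lambda>n x. \<Sum>N<n. d N * of_real x ^ N) F sequentially"
    unfolding F_def
  proof (rule Weierstrass_m_test[OF _ assms])
    fix N and x :: real
    assume "x \<in> {0..1}"
    then show "norm (d N * of_real x ^ N) \<le> norm (d N)"
      by (simp add: norm_mult norm_power mult_left_le power_le_one)
  qed
  have "continuous_on {0..1} F"
    by (rule uniform_limit_theorem[OF _ limit]) (auto intro!: always_eventually continuous_intros)
  then have "(F \<longlongrightarrow> F 1) (at 1 within {0..1})"
    by (simp add: continuous_on_def)
  then show ?thesis
    by (simp add: F_def at_within_Icc_at_left)
qed

lemma gen_binomial_complex_index_weighted:
  fixes z a :: complex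
  assumes "norm z < 1"
  shows "(\<lambda>n. of_nat n * (a gchoose n) * z ^ n) sums (a * z * (1 + z) powr (a - 1))"
proof -
  have "(\<lambda>n. a * z * (((a - 1) gchoose n) * z ^ n)) sums (a * z * (1 + z) powr (a - 1))"
    by (rule sums_mult[OF gen_binomial_complex[OF assms]])
  moreover have "a * z * (((a - 1) gchoose n) * z ^ n) = of_nat (Suc n) * (a gchoose Suc n) * z ^ Suc n" for n
    using gbinomial_absorption[of n a] by (simp add: algebra_simps)
  ultimately have "(\<lambda>n. of_nat (Suc n) * (a gchoose Suc n) * z ^ Suc n) sums (a * z * (1 + z) powr (a - 1))"
    by simp
  then show ?thesis
    using sums_Suc_iff[of "\<lambda>n. of_nat n * (a gchoose n) * z ^ n"] by simp
qed

lemma kdf_term_entry: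
  fixes \<alpha> \<beta> b c :: complex
  assumes "\<alpha> \<noteq> 0" and "pochhammer (\<alpha> / 2) n \<noteq> 0" and "pochhammer \<beta> (m + n) \<noteq> 0"
  shows "kdf_term [\<alpha>] [b] [c, \<alpha> / 2 + 1] [\<beta>] [] [\<alpha> / 2] (-1) (-1) (m, n)
     = ((- \<alpha>) gchoose (m + n)) / pochhammer \<beta> (m + n)
       * (of_nat (m + n choose m) * pochhammer b m * pochhammer c n * (1 + 2 * of_nat n / \<alpha>))"
proof -
  have shift: "pochhammer (\<alpha> / 2 + 1) n = pochhammer (\<alpha> / 2) n * (1 + 2 * of_nat n / \<alpha>)"
    using assms(1) by (subst pochhammer_add_one) (simp_all add: field_simps)
  have gchoose: "(- \<alpha>) gchoose (m + n) = (-1) ^ m * (-1) ^ n * pochhammer \<alpha> (m + n) / fact (m + n)"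
    by (simp add: gbinomial_pochhammer power_add)
  have binomial: "(of_nat (m + n choose m) :: complex) = fact (m + n) / (fact m * fact n)"
    using binomial_fact[of m "m + n"] by simp
  have "kdf_term [\<alpha>] [b] [c, \<alpha> / 2 + 1] [\<beta>] [] [\<alpha> / 2] (-1) (-1) (m, n)
      = pochhammer \<alpha> (m + n) * pochhammer b m * (pochhammer c n * pochhammer (\<alpha> / 2 + 1) n)
        / (pochhammer \<beta> (m + n) * pochhammer (\<alpha> / 2) n) * ((-1) ^ m / fact m) * ((-1) ^ n / fact n)"
    by (simp add: kdf_term_def)
  also have "\<dots> = ((- \<alpha>) gchoose (m + n)) / pochhammer \<beta> (m + n)
       * (of_nat (m + n choose m) * pochhammer b m * pochhammer c n * (1 + 2 * of_nat n / \<alpha>))"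
    unfolding shift gchoose binomial using assms(2,3) by (simp add: field_simps)
  finally show ?thesis .
qed

lemma kdf_term_diagonal_sum:
  fixes \<alpha> \<beta> b c :: complex
  assumes "\<alpha> / 2 \<notin> \<int>\<^sub>\<le>\<^sub>0" and "\<beta> \<notin> \<int>\<^sub>\<le>\<^sub>0" and "b + c = \<beta>"
  shows "(\<Sum>m\<le>N. kdf_term [\<alpha>] [b] [c, \<alpha> / 2 + 1] [\<beta>] [] [\<alpha> / 2] (-1) (-1) (m, N - m))
     = ((- \<alpha>) gchoose N) * (1 + 2 * c / (\<alpha> * \<beta>) * of_nat N)"
proof -
  have "\<alpha> \<noteq> 0" "\<beta> \<noteq> 0"
    using assms(1,2) by auto
  have "pochhammer (\<alpha> / 2) n \<noteq> 0" "pochhammer \<beta> n \<noteq> 0" for n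
    using assms(1,2) pochhammer_eq_0_imp_nonpos_Int by blast+
  then have "(\<Sum>m\<le>N. kdf_term [\<alpha>] [b] [c, \<alpha> / 2 + 1] [\<beta>] [] [\<alpha> / 2] (-1) (-1) (m, N - m))
      = (\<Sum>m\<le>N. ((- \<alpha>) gchoose N) / pochhammer \<beta> N
          * (of_nat (N choose m) * pochhammer b m * pochhammer c (N - m) * (1 + 2 * of_nat (N - m) / \<alpha>)))"
    using \<open>\<alpha> \<noteq> 0\<close> by (intro sum.cong) (simp_all add: kdf_term_entry)
  also have "\<dots> = ((- \<alpha>) gchoose N) / pochhammer \<beta> N
        * ((\<Sum>m\<le>N. of_nat (N choose m) * pochhammer b m * pochhammer c (N - m))
           + 2 / \<alpha> * (\<Sum>m\<le>N. of_nat (N choose m) * of_nat (N - m) * pochhammer b m * pochhammer c (N - m)))"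
    unfolding sum_distrib_left sum.distrib[symmetric]
    using \<open>\<alpha> \<noteq> 0\<close> by (intro sum.cong) (simp_all add: field_simps)
  also have "\<dots> = ((- \<alpha>) gchoose N) / pochhammer \<beta> N
        * (pochhammer \<beta> N + 2 / \<alpha> * (of_nat N * c * pochhammer (\<beta> + 1) (N - 1)))"
    unfolding pochhammer_binomial_sum_weighted pochhammer_binomial_sum[symmetric] assms(3) ..
  also have "\<dots> = ((- \<alpha>) gchoose N) * (1 + 2 * c / (\<alpha> * \<beta>) * of_nat N)"
  proof (cases N)
    case (Suc M)
    then have "pochhammer \<beta> N = \<beta> * pochhammer (\<beta> + 1) (N - 1)"
      by (simp add: pochhammer_rec)
    then show ?thesis
      using \<open>\<alpha> \<noteq> 0\<close> \<open>\<beta> \<noteq> 0\<close> \<open>pochhammer \<beta> N \<noteq> 0\<close> by (simp add: field_simps)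
  qed simp
  finally show ?thesis .
qed

lemma gen_binomial_complex_weighted_at_one:
  fixes a K S :: complex
  assumes "((\<lambda>N. (a gchoose N) * (1 + K * of_nat N)) has_sum S) UNIV"
  shows "S = 2 powr a * (1 + K * a / 2)"
proof -
  define d where "d = (\<lambda>N. (a gchoose N) * (1 + K * of_nat N))"
  define G where "G x = (1 + of_real x) powr a + K * (a * of_real x * (1 + of_real x) powr (a - 1))"
    for x :: real
  have "(\<Sum>N. d N) = S" and "d summable_on UNIV"
    using assms unfolding d_def[symmetric] by (auto simp: sums_iff dest: has_sum_imp_sums has_sum_imp_summable)
  then have "summable (\<lambda>N. norm (d N))"
    by (simp add: summable_on_iff_abs_summable_on_complex summable_on_UNIV_nonneg_real_iff)
  then have Abel: "((\<lambda>x. \<Sum>N. d N * of_real x ^ N) \<longlongrightarrow> S) (at_left 1)"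
    using Abel_limit_summable_norm \<open>(\<Sum>N. d N) = S\<close> by fastforce
  have "(\<lambda>N. d N * of_real x ^ N) sums G x" if "\<bar>x\<bar> < 1" for x
  proof -
    have "norm (of_real x :: complex) < 1"
      using that by simp
    from sums_add[OF gen_binomial_complex[OF this, of a]
        sums_mult[OF gen_binomial_complex_index_weighted[OF this, of a], of K]]
    show ?thesis
      by (simp add: d_def G_def algebra_simps)
  qed
  then have "eventually (\<lambda>x. (\<Sum>N. d N * of_real x ^ N) = G x) (at_left 1)"
    using eventually_at_left_real[of 0 "1::real"] by (auto elim!: eventually_mono simp: sums_iff)
  moreover have "(G \<longlongrightarrow> G 1) (at_left 1)"
    unfolding G_def by (intro tendsto_intros) (auto simp: complex_nonpos_Reals_iff)
  ultimately have "S = G 1"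
    using Abel by (metis (mono_tags) Lim_transform_eventually tendsto_unique trivial_limit_at_left_real)
  then show ?thesis
    using powr_diff[of 2 a 1] by (simp add: G_def field_simps)
qed

lemma KdF_closed_form:
  fixes \<alpha> \<beta> b c :: complex
  assumes "\<beta> \<notin> \<int>\<^sub>\<le>\<^sub>0" and "\<alpha> / 2 \<notin> \<int>\<^sub>\<le>\<^sub>0" and "b + c = \<beta>"
    and "kdf_converges [\<alpha>] [b] [c, \<alpha> / 2 + 1] [\<beta>] [] [\<alpha> / 2] (-1) (-1)"
  shows "KdF [\<alpha>] [b] [c, \<alpha> / 2 + 1] [\<beta>] [] [\<alpha> / 2] (-1) (-1) = 2 powr (- \<alpha>) * b / \<beta>"
proof -
  define S where "S = KdF [\<alpha>] [b] [c, \<alpha> / 2 + 1] [\<beta>] [] [\<alpha> / 2] (-1) (-1)"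
  have "\<alpha> \<noteq> 0" "\<beta> \<noteq> 0"
    using assms(1,2) by auto
  have "(kdf_term [\<alpha>] [b] [c, \<alpha> / 2 + 1] [\<beta>] [] [\<alpha> / 2] (-1) (-1) has_sum S) UNIV"
    using assms(4) unfolding kdf_converges_def S_def KdF_def by (rule has_sum_infsum)
  then have "((\<lambda>N. ((- \<alpha>) gchoose N) * (1 + 2 * c / (\<alpha> * \<beta>) * of_nat N)) has_sum S) UNIV"
    unfolding kdf_term_diagonal_sum[OF assms(2,1,3), symmetric] by (rule has_sum_diagonals)
  then have "S = 2 powr (- \<alpha>) * (1 + 2 * c / (\<alpha> * \<beta>) * (- \<alpha>) / 2)"
    by (rule gen_binomial_complex_weighted_at_one)
  also have "\<dots> = 2 powr (- \<alpha>) * b / \<beta>"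
    using assms(3) \<open>\<alpha> \<noteq> 0\<close> \<open>\<beta> \<noteq> 0\<close> by (simp add: field_simps flip: distrib_right)
  finally show ?thesis
    by (simp add: S_def)
qed

theorem theorem3:
  fixes i :: nat and \<alpha> \<beta> :: complex
  assumes "\<beta> \<notin> \<int>\<^sub>\<le>\<^sub>0" and "\<alpha> / 2 \<notin> \<int>\<^sub>\<le>\<^sub>0"
  shows
   "(kdf_converges [\<alpha>] [\<beta> - 2 - of_nat i] [2 + of_nat i, \<alpha> / 2 + 1]
                  [\<beta>] [] [\<alpha> / 2] (-1) (-1)
     \<and> \<beta> / 2 \<notin> \<int>\<^sub>\<le>\<^sub>0 \<and> \<beta> / 2 - of_nat i - 2 \<notin> \<int>\<^sub>\<le>\<^sub>0
     \<and> (\<forall>r\<le>i. \<beta> / 4 - 1 + (of_nat r - of_nat i) / 2 \<notin> \<int>\<^sub>\<le>\<^sub>0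
              \<and> \<beta> / 4 + 1 + (of_nat r - of_nat i) / 2 \<notin> \<int>\<^sub>\<le>\<^sub>0)
     \<longrightarrow>
     KdF [\<alpha>] [\<beta> - 2 - of_nat i] [2 + of_nat i, \<alpha> / 2 + 1]
         [\<beta>] [] [\<alpha> / 2] (-1) (-1)
     = (2 powr (-2 - \<alpha>) * Gamma (\<beta> / 2))
         / (fact (i + 1) * Gamma (\<beta> / 2 - of_nat i - 2))
       * (\<Sum>r\<le>i. (-1) ^ r * of_nat (i choose r)
            * Gamma (\<beta> / 4 - 1 + (of_nat r - of_nat i) / 2)
            / Gamma (\<beta> / 4 + 1 + (of_nat r - of_nat i) / 2)))
    \<and>
    (kdf_converges [\<alpha>] [\<beta> - 2 + of_nat i] [2 - of_nat i, \<alpha> / 2 + 1]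
                  [\<beta>] [] [\<alpha> / 2] (-1) (-1)
     \<and> \<beta> / 2 \<notin> \<int>\<^sub>\<le>\<^sub>0 \<and> \<beta> / 2 + of_nat i - 2 \<notin> \<int>\<^sub>\<le>\<^sub>0
     \<and> (\<forall>r\<le>i. \<beta> / 4 - 1 + (of_nat r + of_nat i) / 2 \<notin> \<int>\<^sub>\<le>\<^sub>0
              \<and> \<beta> / 4 + 1 + (of_nat r - of_nat i) / 2 \<notin> \<int>\<^sub>\<le>\<^sub>0)
     \<longrightarrow>
     KdF [\<alpha>] [\<beta> - 2 + of_nat i] [2 - of_nat i, \<alpha> / 2 + 1]
         [\<beta>] [] [\<alpha> / 2] (-1) (-1)
     = (2 powr (-2 - \<alpha>) * Gamma (\<beta> / 2)) / Gamma (\<beta> / 2 + of_nat i - 2)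
       * (\<Sum>r\<le>i. of_nat (i choose r)
            * Gamma (\<beta> / 4 - 1 + (of_nat r + of_nat i) / 2)
            / Gamma (\<beta> / 4 + 1 + (of_nat r - of_nat i) / 2)))"
proof -
  have "-2 - \<alpha> = - \<alpha> - of_nat 2"
    by simp
  then have powr_eq: "(2::complex) powr (-2 - \<alpha>) = 2 powr (- \<alpha>) / 4"
    by (simp only: powr_diff) (simp add: powr_nat')
  have KdF_eq: "KdF [\<alpha>] [b] [c, \<alpha> / 2 + 1] [\<beta>] [] [\<alpha> / 2] (-1) (-1) = 2 powr (-2 - \<alpha>) * G / D * s"
    if "kdf_converges [\<alpha>] [b] [c, \<alpha> / 2 + 1] [\<beta>] [] [\<alpha> / 2] (-1) (-1)"
      and "b + c = \<beta>" and "G / D * s = 4 * b / \<beta>" for b c G D s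
  proof -
    have "2 powr (-2 - \<alpha>) * G / D * s = 2 powr (- \<alpha>) / 4 * (G / D * s)"
      by (simp only: powr_eq) simp
    also have "\<dots> = 2 powr (- \<alpha>) * b / \<beta>"
      unfolding that(3) by simp
    finally show ?thesis
      using KdF_closed_form[OF assms that(2,1)] by simp
  qed
  show ?thesis
    using assms(1)
    by (intro conjI impI KdF_eq Gamma_alternating_binomial_sum Gamma_binomial_sum; elim conjE; auto)
qed

end
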